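(* Let $T=\{(e_1,f_1),\dots,(e_m,f_m)\}\subset\mathbb{N}^2$ be completely disjointed and negative, with $f_1<\dots<f_m$. For a permutation $\sigma\in S_m$ put $\sigma(T)=\{(e_{\sigma(1)},f_1),\dots,(e_{\sigma(m)},f_m)\}$, and let $\mathcal{T}=\{\sigma(T)\mid\sigma\in S_m,\ \sigma(T)\text{ negative}\}$. Order $\mathcal{T}$ by declaring $\{(a_1,f_1),\dots,(a_m,f_m)\}<\{(b_1,f_1),\dots,(b_m,f_m)\}$ if $a_i>b_i$ for the smallest $i$ with $a_i\ne b_i$, and let $\widetilde{T}$ be the minimal element of $\mathcal{T}$. Then $\widetilde T$ is a negative twisted chain.
   Context: $\mathbb{N}$ = positive integers. A subset of $\mathbb{N}^2$ is negative if each element $(e,f)$ has $e<f$. A subset $\{(e_1,f_1),\dots,(e_m,f_m)\}$ of $\mathbb{N}^2$ is completely disjointed if the $2m$ numbers $e_1,f_1,\dots,e_m,f_m$ are pairwise distinct. For negative points, $(e,f)\prec(g,h)$ means $f<h$ and $e>g$, and $(c,d)\wedge(e,f)=(\max(c,e),\min(d,f))$. A negative twisted chain is a completely disjointed negative subset $T$ of $\mathbb{N}^2$ such that for all distinct $u,v\in T$, either $u\prec v$, or $v\prec u$, or $u\wedge v$ is not negative. *)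

theory Defs
  imports Main "HOL-Combinatorics.Permutations"
begin

text \<open>Points of N^2 are pairs of naturals; positivity is imposed separately.\<close>

definition negative :: "(nat \<times> nat) set \<Rightarrow> bool" where
  "negative S \<longleftrightarrow> (\<forall>(e, f) \<in> S. e < f)"

text \<open>The 2m coordinates of the m (distinct) points are pairwise distinct.\<close>
definition completely_disjointed :: "(nat \<times> nat) set \<Rightarrow> bool" where
  "completely_disjointed S \<longleftrightarrow>
     (\<exists>ps. distinct ps \<and> set ps = S \<and> distinct (concat (map (\<lambda>(e, f). [e, f]) ps)))"

definition prec :: "nat \<times> nat \<Rightarrow> nat \<times> nat \<Rightarrow> bool" (infix "\<prec>\<^sub>n" 50) where
  "u \<prec>\<^sub>n v \<longleftrightarrow> snd u < snd v \<and> fst u > fst v"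

definition meet :: "nat \<times> nat \<Rightarrow> nat \<times> nat \<Rightarrow> nat \<times> nat" where
  "meet u v = (max (fst u) (fst v), min (snd u) (snd v))"

definition negative_twisted_chain :: "(nat \<times> nat) set \<Rightarrow> bool" where
  "negative_twisted_chain T \<longleftrightarrow> completely_disjointed T \<and> negative T \<and>
     (\<forall>u\<in>T. \<forall>v\<in>T. u \<noteq> v \<longrightarrow> u \<prec>\<^sub>n v \<or> v \<prec>\<^sub>n u \<or> \<not> negative {meet u v})"

definition perm_set :: "(nat \<Rightarrow> nat) \<Rightarrow> (nat \<Rightarrow> nat) \<Rightarrow> nat \<Rightarrow> (nat \<Rightarrow> nat) \<Rightarrow> (nat \<times> nat) set" where
  "perm_set e f m \<sigma> = (\<lambda>i. (e (\<sigma> i), f i)) ` {1..m}"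

definition perm_less :: "(nat \<Rightarrow> nat) \<Rightarrow> nat \<Rightarrow> (nat \<Rightarrow> nat) \<Rightarrow> (nat \<Rightarrow> nat) \<Rightarrow> bool" where
  "perm_less e m \<sigma> \<tau> \<longleftrightarrow>
     (\<exists>k\<in>{1..m}. (\<forall>i\<in>{1..<k}. e (\<sigma> i) = e (\<tau> i)) \<and> e (\<sigma> k) > e (\<tau> k))"

end

theory Submission
  imports Defs
begin

text \<open>If two points of \<open>\<sigma>(T)\<close> with \<open>f i < f j\<close> violate the twisted-chain condition, then
  \<open>e (\<sigma> i) < e (\<sigma> j) < f i < f j\<close>. Exchanging their first coordinates keeps the set negative
  and makes it strictly smaller in the order on \<open>\<T>\<close>, contradicting minimality.
  Complete disjointedness is inherited from \<open>T\<close>, since \<open>\<sigma>(T)\<close> has the same coordinates.\<close>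

lemma set_concat_pairs: "set (concat (map (\<lambda>(e, f). [e, f]) ps)) = fst ` set ps \<union> snd ` set ps"
  by (induction ps) auto

lemma distinct_concat_pairs_iff:
  "distinct (concat (map (\<lambda>(e, f). [e, f]) ps)) \<longleftrightarrow> distinct (map fst ps @ map snd ps)"
proof (induction ps)
  case (Cons p ps)
  then show ?case
    by (cases p) (fastforce simp: set_concat_pairs image_iff)
qed simp

lemma completely_disjointed_iff:
  "completely_disjointed S \<longleftrightarrow>
     finite S \<and> inj_on fst S \<and> inj_on snd S \<and> fst ` S \<inter> snd ` S = {}"
proof
  assume "completely_disjointed S"
  then obtain ps where "S = set ps" and "distinct (map fst ps)" and "distinct (map snd ps)"
    and "set (map fst ps) \<inter> set (map snd ps) = {}"
    unfolding completely_disjointed_def distinct_concat_pairs_iff distinct_append by blast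
  then show "finite S \<and> inj_on fst S \<and> inj_on snd S \<and> fst ` S \<inter> snd ` S = {}"
    by (simp add: distinct_map)
next
  assume S: "finite S \<and> inj_on fst S \<and> inj_on snd S \<and> fst ` S \<inter> snd ` S = {}"
  obtain ps where ps: "distinct ps" "set ps = S"
    using S finite_distinct_list by meson
  have "distinct (map fst ps @ map snd ps)"
    using S ps by (simp add: distinct_map)
  with ps show "completely_disjointed S"
    unfolding completely_disjointed_def distinct_concat_pairs_iff by blast
qed

lemma completely_disjointed_image_iff:
  assumes "finite I" and "inj_on b I"
  shows "completely_disjointed ((\<lambda>i. (a i, b i)) ` I) \<longleftrightarrow>
           inj_on a I \<and> a ` I \<inter> b ` I = {}"
proof -
  let ?p = "\<lambda>i. (a i, b i)"
  have "inj_on ?p I"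
    using assms(2) by (auto simp: inj_on_def)
  then have "inj_on fst (?p ` I) \<longleftrightarrow> inj_on a I" and "inj_on snd (?p ` I) \<longleftrightarrow> inj_on b I"
    by (simp_all add: comp_inj_on_iff comp_def)
  moreover have "fst ` ?p ` I = a ` I" and "snd ` ?p ` I = b ` I"
    by (simp_all add: image_image)
  ultimately show ?thesis
    using assms by (simp add: completely_disjointed_iff)
qed

lemma completely_disjointed_perm_set:
  assumes cd: "completely_disjointed ((\<lambda>i. (e i, f i)) ` {1..m})"
    and inj_f: "inj_on f {1..m}" and perm: "\<sigma> permutes {1..m}"
  shows "completely_disjointed (perm_set e f m \<sigma>)"
proof -
  have inj_e: "inj_on e {1..m}" and disj: "e ` {1..m} \<inter> f ` {1..m} = {}"
    using cd inj_f completely_disjointed_image_iff[of "{1..m}" f e] by simp_all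
  have "inj_on (e \<circ> \<sigma>) {1..m}"
    using inj_e permutes_inj_on[OF perm] permutes_image[OF perm] by (simp add: comp_inj_on)
  moreover have "(e \<circ> \<sigma>) ` {1..m} = e ` {1..m}"
    by (metis image_comp permutes_image[OF perm])
  ultimately show ?thesis
    using disj inj_f by (simp add: perm_set_def completely_disjointed_image_iff comp_def)
qed

lemma negative_perm_set_iff:
  "negative (perm_set e f m \<sigma>) \<longleftrightarrow> (\<forall>i\<in>{1..m}. e (\<sigma> i) < f i)"
  by (auto simp: negative_def perm_set_def)

lemma negative_perm_set_swap:
  assumes "negative (perm_set e f m \<sigma>)" and "i \<in> {1..m}" and "j \<in> {1..m}"
    and "e (\<sigma> j) < f i" and "e (\<sigma> i) < f j"
  shows "negative (perm_set e f m (\<sigma> \<circ> transpose i j))"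
  using assms by (auto simp: negative_perm_set_iff transpose_def)

lemma perm_less_swap:
  assumes "i \<in> {1..m}" and "i < j" and "e (\<sigma> i) < e (\<sigma> j)"
  shows "perm_less e m (\<sigma> \<circ> transpose i j) \<sigma>"
  unfolding perm_less_def
proof (intro bexI conjI)
  show "\<forall>l\<in>{1..<i}. e ((\<sigma> \<circ> transpose i j) l) = e (\<sigma> l)"
    using assms(2) by auto
  show "e (\<sigma> i) < e ((\<sigma> \<circ> transpose i j) i)"
    using assms(3) by simp
qed (fact assms(1))

lemma minimal_perm_no_crossing:
  assumes perm: "\<sigma> permutes {1..m}" and neg: "negative (perm_set e f m \<sigma>)"
    and minimal: "\<not> (\<exists>\<tau>. \<tau> permutes {1..m} \<and> negative (perm_set e f m \<tau>) \<and>
                        perm_less e m \<tau> \<sigma>)"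
    and ij: "i \<in> {1..m}" "j \<in> {1..m}" "i < j" and f_less: "f i < f j"
    and e_less: "e (\<sigma> i) < e (\<sigma> j)"
  shows "f i \<le> e (\<sigma> j)"
proof (rule ccontr)
  assume "\<not> f i \<le> e (\<sigma> j)"
  moreover have "e (\<sigma> i) < f i"
    using neg ij(1) by (simp add: negative_perm_set_iff)
  ultimately have "negative (perm_set e f m (\<sigma> \<circ> transpose i j))"
    using negative_perm_set_swap[OF neg ij(1,2)] f_less by simp
  moreover have "(\<sigma> \<circ> transpose i j) permutes {1..m}"
    using permutes_compose[OF permutes_swap_id[OF ij(1,2)] perm] .
  ultimately show False
    using minimal perm_less_swap[where e = e and \<sigma> = \<sigma>, OF ij(1,3) e_less] by blast
qed

lemma prec_or_meet_not_negative:
  assumes "b < d" and "a \<noteq> c" and "a < c \<Longrightarrow> b \<le> c"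
  shows "(a, b) \<prec>\<^sub>n (c, d) \<or> (c, d) \<prec>\<^sub>n (a, b) \<or> \<not> negative {meet (a, b) (c, d)}"
  using assms by (cases "a < c") (auto simp: prec_def meet_def negative_def)

lemma minimal_perm_pair_condition:
  assumes perm: "\<sigma> permutes {1..m}" and neg: "negative (perm_set e f m \<sigma>)"
    and minimal: "\<not> (\<exists>\<tau>. \<tau> permutes {1..m} \<and> negative (perm_set e f m \<tau>) \<and>
                        perm_less e m \<tau> \<sigma>)"
    and inj_e\<sigma>: "inj_on (\<lambda>i. e (\<sigma> i)) {1..m}"
    and ij: "i \<in> {1..m}" "j \<in> {1..m}" "i < j" and f_less: "f i < f j"
  shows "(e (\<sigma> i), f i) \<prec>\<^sub>n (e (\<sigma> j), f j) \<or> (e (\<sigma> j), f j) \<prec>\<^sub>n (e (\<sigma> i), f i) \<or>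
      \<not> negative {meet (e (\<sigma> i), f i) (e (\<sigma> j), f j)}"
proof (rule prec_or_meet_not_negative)
  show "e (\<sigma> i) \<noteq> e (\<sigma> j)"
    using inj_onD[OF inj_e\<sigma>, of i j] ij by auto
  show "e (\<sigma> i) < e (\<sigma> j) \<Longrightarrow> f i \<le> e (\<sigma> j)"
    using minimal_perm_no_crossing[OF perm neg minimal ij f_less] .
qed (fact f_less)

lemma meet_commute: "meet u v = meet v u"
  by (simp add: meet_def max.commute min.commute)

theorem lemma9p2:
  fixes e f :: "nat \<Rightarrow> nat" and m :: nat and \<sigma> :: "nat \<Rightarrow> nat"
  assumes pos: "\<forall>i\<in>{1..m}. 0 < e i \<and> 0 < f i"
    and cd: "completely_disjointed ((\<lambda>i. (e i, f i)) ` {1..m})"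
    and neg: "negative ((\<lambda>i. (e i, f i)) ` {1..m})"
    and incr: "\<forall>i\<in>{1..m}. \<forall>j\<in>{1..m}. i < j \<longrightarrow> f i < f j"
    and perm: "\<sigma> permutes {1..m}"
    and in_fam: "negative (perm_set e f m \<sigma>)"
    and minimal: "\<not> (\<exists>\<tau>. \<tau> permutes {1..m} \<and> negative (perm_set e f m \<tau>) \<and>
                        perm_less e m \<tau> \<sigma>)"
  shows "negative_twisted_chain (perm_set e f m \<sigma>)"
proof -
  have inj_f: "inj_on f {1..m}"
  proof (rule linorder_inj_onI')
    fix i j assume "i \<in> {1..m}" "j \<in> {1..m}" "i < j"
    then show "f i \<noteq> f j"
      using incr by fastforce
  qed
  have cd_\<sigma>: "completely_disjointed (perm_set e f m \<sigma>)"
    using completely_disjointed_perm_set[OF cd inj_f perm] .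
  then have inj_e\<sigma>: "inj_on (\<lambda>i. e (\<sigma> i)) {1..m}"
    using inj_f completely_disjointed_image_iff[of "{1..m}" f "\<lambda>i. e (\<sigma> i)"]
    by (simp add: perm_set_def)
  have pair: "(e (\<sigma> i), f i) \<prec>\<^sub>n (e (\<sigma> j), f j) \<or> (e (\<sigma> j), f j) \<prec>\<^sub>n (e (\<sigma> i), f i) \<or>
      \<not> negative {meet (e (\<sigma> i), f i) (e (\<sigma> j), f j)}"
    if "i \<in> {1..m}" "j \<in> {1..m}" "i < j" for i j
    using minimal_perm_pair_condition[OF perm in_fam minimal inj_e\<sigma> that] incr that by blast
  have "u \<prec>\<^sub>n v \<or> v \<prec>\<^sub>n u \<or> \<not> negative {meet u v}"
    if u: "u \<in> perm_set e f m \<sigma>" and v: "v \<in> perm_set e f m \<sigma>" and "u \<noteq> v" for u v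
  proof -
    obtain i j where "i \<in> {1..m}" "j \<in> {1..m}"
      and u_eq: "u = (e (\<sigma> i), f i)" and v_eq: "v = (e (\<sigma> j), f j)"
      using u v unfolding perm_set_def by blast
    moreover have "i \<noteq> j"
      using \<open>u \<noteq> v\<close> u_eq v_eq by blast
    ultimately show ?thesis
      using pair[of i j] pair[of j i] by (cases "i < j") (auto simp: meet_commute)
  qed
  with cd_\<sigma> in_fam show ?thesis
    unfolding negative_twisted_chain_def by blast
qed

end
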